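(* Let $S_A>0$, $c_{\mathrm{TX}}>0$, $\phi>0$, $\theta=\phi/c_{\mathrm{TX}}$, let $B\geq 1$ be an integer, and let $\lambda$ satisfy $$0<\lambda\leq \lambda_{\mathrm{th}}\triangleq\frac{1}{\left(\sqrt{1+1/S_A}+\sqrt{\theta}\right)^2}.$$ Define $v_{\mathrm{th}}(\lambda,-1)\triangleq 0$, $t^*\triangleq\left\lceil\sqrt{\frac{1}{\lambda S_A}+\frac{1}{4}}-\frac{3}{2}\right\rceil$, and for integers $0\leq t\leq t^*$, $$v_{\mathrm{th}}(\lambda,t)\triangleq \frac{\sqrt{\lambda\theta}+\lambda\left(t+\frac{1}{2}\right)}{1-\lambda (t+1)tS_A}+\frac{\sqrt{\lambda}\sqrt{\sqrt{\lambda\theta}(2t+1)+\lambda \theta(t+1)tS_A+\frac{\lambda}{4}+\frac{1}{S_A}}}{1-\lambda(t+1)tS_A}.$$ Let $V_k\in(0,1]$ and let $(t^{(MP)}(V_k),S_M^{(MP)}(V_k))$ denote the myopic policy, i.e. a (possibly randomized among minimizers) minimizer over $t\in\{0,1,\dots,B\}$, $S_M\geq 0$ of $$F(t,S_M)=\hat\nu\left(V_k,\frac{tS_AS_M}{S_A+S_M}\right)+\lambda t(1+\theta S_M),\qquad \hat\nu(V,\Lambda)=\frac{V}{1+V\Lambda}.$$ Then: (i) if $V_k>v_{\mathrm{th}}(\lambda,t^* )$, then $t^{(MP)}(V_k)=\min\{t^*+1,B\}$; (ii) if $V_k=v_{\mathrm{th}}(\lambda,\hat t)$ for some $\hat t\in\{0,1,\dots,t^*\}$,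 then $t^{(MP)}(V_k)=\min\{\hat t+1,B\}$ with probability $p_{\hat t}$ and $t^{(MP)}(V_k)=\min\{\hat t,B\}$ otherwise, for some $p_{\hat t}\in[0,1]$ (both values minimize $F$); (iii) otherwise, $t^{(MP)}(V_k)=\min\{\hat t,B\}$, where $\hat t$ is the unique element of $\{0,1,\dots,t^*\}$ with $v_{\mathrm{th}}(\lambda,\hat t-1)<V_k<v_{\mathrm{th}}(\lambda,\hat t)$; (iv) in all cases, $$S_M^{(MP)}(V_k)=\left(\frac{1}{\sqrt{\lambda\theta}}-\frac{1}{V_k}\right)^+\frac{S_AV_k}{1+t^{(MP)}(V_k)S_AV_k}.$$
   Context: Model: a fusion center estimates a scalar Gaussian process; $V_k$ is the prior variance of the state at slot $k$. In the coordinated scheme (all sensors in the best accuracy state), the fusion center activates $t$ sensors, each measuring with local measurement SNR $S_M$; the aggregate SNR collected is $tS_AS_M/(S_A+S_M)$, where $S_A$ is the ambient SNR; the resulting posterior variance is $\hat\nu(V_k,\Lambda)=V_k/(1+V_k\Lambda)$. Each active sensor incurs cost $c_{\mathrm{TX}}+\phi S_M$; $\lambda\geq 0$ is a Lagrange multiplier, and the normalized cost of $t$ active sensors is $\lambda t(1+\theta S_M)$. $(x)^+=\max\{x,0\}$ and $\lceil\cdot\rceil$ is the ceiling. *)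

theory Defs
  imports Complex_Main
begin

definition nu_hat :: "real \<Rightarrow> real \<Rightarrow> real" where
  "nu_hat V L = V / (1 + V * L)"

definition F_obj :: "real \<Rightarrow> real \<Rightarrow> real \<Rightarrow> real \<Rightarrow> nat \<Rightarrow> real \<Rightarrow> real" where
  "F_obj SA lam theta V t SM =
     nu_hat V (real t * SA * SM / (SA + SM)) + lam * real t * (1 + theta * SM)"

definition is_myopic :: "real \<Rightarrow> real \<Rightarrow> real \<Rightarrow> nat \<Rightarrow> real \<Rightarrow> nat \<Rightarrow> real \<Rightarrow> bool" where
  "is_myopic SA lam theta B V t SM \<longleftrightarrow>
     t \<le> B \<and> SM \<ge> 0 \<and>
     (\<forall>t'. \<forall>SM'. t' \<le> B \<longrightarrow> SM' \<ge> 0 \<longrightarrow>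
        F_obj SA lam theta V t SM \<le> F_obj SA lam theta V t' SM')"

definition lam_th :: "real \<Rightarrow> real \<Rightarrow> real" where
  "lam_th SA theta = 1 / (sqrt (1 + 1 / SA) + sqrt theta) ^ 2"

definition t_star :: "real \<Rightarrow> real \<Rightarrow> int" where
  "t_star SA lam = \<lceil>sqrt (1 / (lam * SA) + 1/4) - 3/2\<rceil>"

definition v_th :: "real \<Rightarrow> real \<Rightarrow> real \<Rightarrow> int \<Rightarrow> real" where
  "v_th SA theta lam t =
     (if t = -1 then 0 else
      (sqrt (lam * theta) + lam * (real_of_int t + 1/2)) /
         (1 - lam * (real_of_int t + 1) * real_of_int t * SA)
      + sqrt lam * sqrt (sqrt (lam * theta) * (2 * real_of_int t + 1)
            + lam * theta * (real_of_int t + 1) * real_of_int t * SA + lam / 4 + 1 / SA) /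
         (1 - lam * (real_of_int t + 1) * real_of_int t * SA))"

definition pos_part :: "real \<Rightarrow> real" where
  "pos_part x = max x 0"

definition SM_formula :: "real \<Rightarrow> real \<Rightarrow> real \<Rightarrow> real \<Rightarrow> nat \<Rightarrow> real" where
  "SM_formula SA lam theta V t =
     pos_part (1 / sqrt (lam * theta) - 1 / V) * (SA * V / (1 + real t * SA * V))"

end

theory Submission
  imports Defs
begin

text \<open>
  For a fixed number t of active sensors, F is minimized over S_M \<ge> 0 in closed form.
  With P = max (V - \<surd>(\<lambda>\<theta>)) 0 the minimum is
  F_opt t = V + \<lambda> t - P^2 t S_A / (1 + t S_A V),
  attained at the stated S_M, and only there once t \<ge> 1. The increments
  F_opt (n + 1) - F_opt n = \<lambda> - P^2 S_A / ((1 + n S_A V) (1 + (n + 1) S_A V))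
  are nondecreasing in n, so F_opt is discretely convex and its minimizers over {0..B} sit
  where the increments change sign. For n \<le> t* the n-th increment is negative exactly when
  V > v_th(\<lambda>, n): v_th(\<lambda>, n) is the larger root of the quadratic
  S_A (V - \<surd>(\<lambda>\<theta>))^2 - \<lambda> (1 + n S_A V) (1 + (n + 1) S_A V) in V, whose leading
  coefficient S_A (1 - \<lambda> n (n + 1) S_A) is positive precisely for n \<le> t*, and
  \<surd>(\<lambda>\<theta>) lies between its roots. For n > t* the increment is positive.
\<close>

lemma lift_Suc_antimono_less_upto:
  fixes g :: "nat \<Rightarrow> 'a::order"
  assumes "\<And>n. n < k \<Longrightarrow> g (Suc n) < g n" and "i < j" and "j \<le> k"
  shows "g j < g i"
  using assms(2,3)
proof (induction i j rule: less_Suc_induct)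
  case (1 i)
  then show ?case using assms(1) by simp
next
  case (2 i j l)
  then show ?case using order.strict_trans by fastforce
qed

lemma lift_Suc_mono_less_from:
  fixes g :: "nat \<Rightarrow> 'a::order"
  assumes "\<And>n. k \<le> n \<Longrightarrow> g n < g (Suc n)" and "k \<le> i" and "i < j"
  shows "g i < g j"
  using assms(3,2)
proof (induction i j rule: less_Suc_induct)
  case (1 i)
  then show ?case using assms(1) by simp
next
  case (2 i j l)
  then show ?case using order.strict_trans by fastforce
qed

definition strict_valley :: "(nat \<Rightarrow> 'a::order) \<Rightarrow> nat \<Rightarrow> bool" where
  "strict_valley g k \<longleftrightarrow> (\<forall>n<k. g (Suc n) < g n) \<and> (\<forall>n\<ge>k. g n < g (Suc n))"

lemma strict_valley_unique:
  assumes "strict_valley g k" and "strict_valley g l"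
  shows "k = l"
proof (rule ccontr)
  assume "k \<noteq> l"
  then consider "k < l" | "l < k" by linarith
  then show False
    using assms unfolding strict_valley_def by cases (meson less_asym order_refl)+
qed

lemma is_arg_min_atMost_iff:
  fixes g :: "nat \<Rightarrow> 'a::linorder"
  assumes "M \<subseteq> {..B}" and "m \<in> M" and "\<And>u. u \<in> M \<Longrightarrow> g u = g m"
    and "\<And>u. u \<le> B \<Longrightarrow> u \<notin> M \<Longrightarrow> g m < g u"
  shows "is_arg_min g (\<lambda>u. u \<le> B) t \<longleftrightarrow> t \<in> M"
  unfolding is_arg_min_linorder
proof
  assume "t \<le> B \<and> (\<forall>u. u \<le> B \<longrightarrow> g t \<le> g u)"
  moreover have "m \<le> B" using assms(1,2) by auto
  ultimately show "t \<in> M" using assms(4) by (meson not_le)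
next
  assume "t \<in> M"
  then show "t \<le> B \<and> (\<forall>u. u \<le> B \<longrightarrow> g t \<le> g u)"
    using assms by (metis atMost_iff dual_order.order_iff_strict subsetD)
qed

lemma strict_valley_is_arg_min_iff:
  fixes g :: "nat \<Rightarrow> 'a::linorder"
  assumes "strict_valley g k"
  shows "is_arg_min g (\<lambda>u. u \<le> B) t \<longleftrightarrow> t = min k B"
proof -
  have less: "g (min k B) < g u" if "u \<le> B" and "u \<noteq> min k B" for u
  proof (cases "u < min k B")
    case True
    then show ?thesis
      using lift_Suc_antimono_less_upto[of k g u "min k B"] assms unfolding strict_valley_def by simp
  next
    case False
    then have "min k B = k" and "k < u" using that by auto
    then show ?thesis
      using lift_Suc_mono_less_from[of k g k u] assms unfolding strict_valley_def by simp
  qed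
  have "is_arg_min g (\<lambda>u. u \<le> B) t \<longleftrightarrow> t \<in> {min k B}"
    by (rule is_arg_min_atMost_iff) (use less in auto)
  then show ?thesis by simp
qed

lemma plateau_is_arg_min_iff:
  fixes g :: "nat \<Rightarrow> 'a::linorder"
  assumes dec: "\<And>n. n < k \<Longrightarrow> g (Suc n) < g n" and flat: "g (Suc k) = g k"
    and inc: "\<And>n. k < n \<Longrightarrow> g n < g (Suc n)"
  shows "is_arg_min g (\<lambda>u. u \<le> B) t \<longleftrightarrow> t = min k B \<or> t = min (Suc k) B"
proof -
  have same: "g (min (Suc k) B) = g (min k B)"
    using flat by (cases "k < B") auto
  have less: "g (min k B) < g u"
    if "u \<le> B" and "u \<noteq> min k B" and "u \<noteq> min (Suc k) B" for u
  proof (cases "u < min k B")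
    case True
    then show ?thesis using lift_Suc_antimono_less_upto[of k g u "min k B"] dec by simp
  next
    case False
    then have "min k B = k" and "Suc k < u" using that by auto
    then show ?thesis
      using lift_Suc_mono_less_from[of "Suc k" g "Suc k" u] inc flat by simp
  qed
  have "is_arg_min g (\<lambda>u. u \<le> B) t \<longleftrightarrow> t \<in> {min k B, min (Suc k) B}"
    by (rule is_arg_min_atMost_iff) (use less same in auto)
  then show ?thesis by simp
qed

lemma le_t_star_iff:
  assumes SA: "SA > 0" and lam: "lam > 0"
  shows "int n \<le> t_star SA lam \<longleftrightarrow> lam * (real n + 1) * real n * SA < 1"
proof -
  define r where "r = sqrt (1 / (lam * SA) + 1/4)"
  have r: "r > 0" "r\<^sup>2 = 1 / (lam * SA) + 1/4"
    unfolding r_def using SA lam by (simp_all add: add_pos_pos)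
  have "int n \<le> t_star SA lam \<longleftrightarrow> real n + 1/2 < r"
    unfolding t_star_def r_def[symmetric] by (simp add: le_ceiling_iff, linarith)
  also have "\<dots> \<longleftrightarrow> (real n + 1/2)\<^sup>2 < r\<^sup>2"
    using r(1) power2_less_imp_less[of "real n + 1/2" r] power_strict_mono[of "real n + 1/2" r 2]
    by auto
  also have "\<dots> \<longleftrightarrow> (real n + 1) * real n < 1 / (lam * SA)"
    unfolding r(2) by (simp add: power2_eq_square algebra_simps)
  also have "\<dots> \<longleftrightarrow> (real n + 1) * real n * (lam * SA) < 1"
    using SA lam by (simp add: less_divide_eq)
  finally show ?thesis by (simp add: algebra_simps)
qed

lemma t_star_nonneg:
  assumes "SA > 0" and "lam > 0"
  shows "t_star SA lam \<ge> 0"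
  using le_t_star_iff[OF assms, of 0] by simp

lemma threshold_quadratic_roots:
  fixes n :: nat
  assumes SA: "SA > 0" and lam: "lam > 0" and theta: "theta > 0"
    and n: "lam * (real n + 1) * real n * SA < 1"
  obtains c r where "c > 0" and "r < sqrt (lam * theta)"
    and "sqrt (lam * theta) < v_th SA theta lam (int n)"
    and "\<And>x. SA * (x - sqrt (lam * theta))\<^sup>2
            - lam * ((1 + real n * SA * x) * (1 + (real n + 1) * SA * x))
          = c * (x - v_th SA theta lam (int n)) * (x - r)"
proof -
  define s where "s = sqrt (lam * theta)"
  define w where "w = sqrt lam * sqrt (s * (2 * real n + 1)
    + lam * theta * (real n + 1) * real n * SA + lam / 4 + 1 / SA)"
  define D where "D = 1 - lam * (real n + 1) * real n * SA"
  define m where "m = s + lam * (real n + 1/2)"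
  have s: "s > 0" "s\<^sup>2 = lam * theta" unfolding s_def using lam theta by simp_all
  have D: "D > 0" unfolding D_def using n by simp
  have w: "w \<ge> 0" "SA * w\<^sup>2 = lam * SA * s * (2 * real n + 1)
      + lam * s\<^sup>2 * (real n + 1) * real n * SA * SA + lam * lam * SA / 4 + lam"
    unfolding w_def s(2) using SA lam theta s(1)
    by (simp_all add: power_mult_distrib add_nonneg_nonneg field_simps)
  have v: "v_th SA theta lam (int n) = (m + w) / D"
    unfolding v_th_def D_def m_def w_def s_def by (simp add: add_divide_distrib)
  have factor: "SA * (x - s)\<^sup>2 - lam * ((1 + real n * SA * x) * (1 + (real n + 1) * SA * x))
      = (SA * D) * (x - (m + w) / D) * (x - (m - w) / D)" for x
  proof -
    have "(x - (m + w) / D) * (x - (m - w) / D) = ((D * x - m)\<^sup>2 - w\<^sup>2) / D\<^sup>2"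
      using D by (simp add: field_simps power2_eq_square)
    then have "(SA * D) * (x - (m + w) / D) * (x - (m - w) / D) = SA * ((D * x - m)\<^sup>2 - w\<^sup>2) / D"
      using D by (simp add: power2_eq_square mult.assoc)
    also have "SA * ((D * x - m)\<^sup>2 - w\<^sup>2)
        = D * (SA * (x - s)\<^sup>2 - lam * ((1 + real n * SA * x) * (1 + (real n + 1) * SA * x)))"
      using w(2) unfolding D_def m_def by (simp add: algebra_simps power2_eq_square)
    finally show ?thesis using D by simp
  qed
  have "lam * ((1 + real n * SA * s) * (1 + (real n + 1) * SA * s)) > 0"
    using SA lam s(1) by (simp add: add_pos_nonneg)
  then have "(SA * D) * (s - (m + w) / D) * (s - (m - w) / D) < 0"
    using factor[of s] by simp
  then have "(s - (m + w) / D) * (s - (m - w) / D) < 0"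
    using SA D by (simp add: mult_less_0_iff mult.assoc)
  moreover have "(m - w) / D \<le> (m + w) / D" using w(1) D by (simp add: divide_right_mono)
  ultimately have "(m - w) / D < s" and "s < (m + w) / D"
    by (auto simp: mult_less_0_iff)
  then show ?thesis
    using that[of "SA * D" "(m - w) / D"] SA D factor unfolding v s_def by simp
qed

definition F_opt :: "real \<Rightarrow> real \<Rightarrow> real \<Rightarrow> real \<Rightarrow> nat \<Rightarrow> real" where
  "F_opt SA lam theta V t = V + lam * real t
     - (pos_part (V - sqrt (lam * theta)))\<^sup>2 * (real t * SA / (1 + real t * SA * V))"

locale myopic_setting =
  fixes SA lam theta V :: real
  assumes SA_pos: "SA > 0" and lam_pos: "lam > 0" and theta_pos: "theta > 0" and V_pos: "V > 0"
begin

context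
  fixes t :: nat
begin

lemma F_obj_eq:
  assumes "x \<ge> 0"
  shows "F_obj SA lam theta V t x =
    V * (SA + x) / (SA + (1 + real t * SA * V) * x) + lam * real t + lam * theta * real t * x"
proof -
  have "SA + (1 + real t * SA * V) * x > 0"
    using SA_pos V_pos assms by (simp add: add_pos_nonneg)
  moreover have "SA + x + V * (real t * SA * x) = SA + (1 + real t * SA * V) * x"
    by (simp add: algebra_simps)
  ultimately show ?thesis
    using SA_pos assms unfolding F_obj_def nu_hat_def by (simp add: field_simps)
qed

lemma F_obj_minus_F_opt_interior:
  assumes "sqrt (lam * theta) < V" and "x \<ge> 0"
  defines "a \<equiv> 1 + real t * SA * V" and "y \<equiv> SA + (1 + real t * SA * V) * x"
  shows "F_obj SA lam theta V t x - F_opt SA lam theta V t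
    = real t * (sqrt (lam * theta) * y - V * SA)\<^sup>2 / (a * y)"
proof -
  define s where "s = sqrt (lam * theta)"
  have a: "a > 0" unfolding a_def using SA_pos V_pos by (simp add: add_pos_nonneg)
  have y: "y > 0" unfolding y_def using SA_pos V_pos assms(2) by (simp add: add_pos_nonneg)
  have x: "x = (y - SA) / a" using a unfolding y_def a_def by simp
  have F: "F_obj SA lam theta V t x = V * (SA + x) / y + lam * real t + s\<^sup>2 * real t * x"
    unfolding F_obj_eq[OF assms(2)] y_def s_def using lam_pos theta_pos by simp
  have G: "F_opt SA lam theta V t = V + lam * real t - (V - s)\<^sup>2 * (real t * SA / a)"
    unfolding F_opt_def pos_part_def a_def s_def using assms(1) by simp
  show ?thesis
    unfolding F G s_def[symmetric] using a y unfolding x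
    by (simp add: field_simps power2_eq_square) (simp add: a_def algebra_simps)
qed

lemma F_obj_minus_F_opt_boundary:
  assumes "V \<le> sqrt (lam * theta)" and "x \<ge> 0"
  defines "y \<equiv> SA + (1 + real t * SA * V) * x"
  shows "F_obj SA lam theta V t x - F_opt SA lam theta V t
    = real t * x * (lam * theta * y - V\<^sup>2 * SA) / y"
proof -
  have y: "y > 0" unfolding y_def using SA_pos V_pos assms(2) by (simp add: add_pos_nonneg)
  have "F_opt SA lam theta V t = V + lam * real t"
    unfolding F_opt_def pos_part_def using assms(1) by simp
  then show ?thesis
    unfolding F_obj_eq[OF assms(2)] y_def[symmetric] using y
    by (simp add: field_simps power2_eq_square) (simp add: y_def algebra_simps)
qed

lemma F_opt_le_F_obj:
  assumes "x \<ge> 0"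
  shows "F_opt SA lam theta V t \<le> F_obj SA lam theta V t x"
proof -
  have a: "1 + real t * SA * V > 0" using SA_pos V_pos by (simp add: add_pos_nonneg)
  have y: "SA \<le> SA + (1 + real t * SA * V) * x" using a assms by simp
  show ?thesis
  proof (cases "sqrt (lam * theta) < V")
    case True
    have "0 \<le> F_obj SA lam theta V t x - F_opt SA lam theta V t"
      unfolding F_obj_minus_F_opt_interior[OF True assms] using a y SA_pos
      by (intro divide_nonneg_pos mult_nonneg_nonneg mult_pos_pos) simp_all
    then show ?thesis by simp
  next
    case False
    then have below: "V \<le> sqrt (lam * theta)" by simp
    then have "V\<^sup>2 \<le> lam * theta" using sqrt_ge_absD[of V] V_pos by simp
    then have "V\<^sup>2 * SA \<le> lam * theta * (SA + (1 + real t * SA * V) * x)"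
      using y SA_pos lam_pos theta_pos by (meson mult_mono less_imp_le mult_pos_pos zero_le_power2)
    then have "0 \<le> F_obj SA lam theta V t x - F_opt SA lam theta V t"
      unfolding F_obj_minus_F_opt_boundary[OF below assms] using y SA_pos assms
      by (intro divide_nonneg_pos mult_nonneg_nonneg) simp_all
    then show ?thesis by simp
  qed
qed

lemma SM_formula_nonneg: "SM_formula SA lam theta V t \<ge> 0"
  unfolding SM_formula_def pos_part_def using SA_pos V_pos by (simp add: add_pos_nonneg)

lemma SM_formula_eq_0:
  assumes "V \<le> sqrt (lam * theta)"
  shows "SM_formula SA lam theta V t = 0"
  using assms lam_pos theta_pos V_pos unfolding SM_formula_def pos_part_def
  by (simp add: field_simps)

lemma F_obj_SM_formula:
  "F_obj SA lam theta V t (SM_formula SA lam theta V t) = F_opt SA lam theta V t"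
proof (cases "sqrt (lam * theta) < V")
  case True
  define s where "s = sqrt (lam * theta)"
  define a where "a = 1 + real t * SA * V"
  have s: "s > 0" unfolding s_def using lam_pos theta_pos by simp
  have a: "a > 0" unfolding a_def using SA_pos V_pos by (simp add: add_pos_nonneg)
  have "1 / s - 1 / V > 0" using True s V_pos unfolding s_def by (simp add: field_simps)
  then have SM: "SM_formula SA lam theta V t = SA * (V - s) / (s * a)"
    unfolding SM_formula_def pos_part_def s_def[symmetric] a_def[symmetric]
    using s V_pos a by (simp add: field_simps)
  have "s * (SA + a * SM_formula SA lam theta V t) = V * SA"
    unfolding SM using s a by (simp add: field_simps)
  then show ?thesis
    using F_obj_minus_F_opt_interior[OF True SM_formula_nonneg]
    unfolding s_def a_def by simp
next
  case False
  then show ?thesis using F_obj_minus_F_opt_boundary[of 0] SM_formula_eq_0 by simp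
qed

lemma SM_formula_unique:
  assumes "t \<ge> 1" and "x \<ge> 0" and "F_obj SA lam theta V t x = F_opt SA lam theta V t"
  shows "x = SM_formula SA lam theta V t"
proof -
  have a: "1 + real t * SA * V > 0" using SA_pos V_pos by (simp add: add_pos_nonneg)
  have y: "SA + (1 + real t * SA * V) * x > 0" using a SA_pos assms(2) by (simp add: add_pos_nonneg)
  show ?thesis
  proof (cases "sqrt (lam * theta) < V")
    case True
    have root: "sqrt (lam * theta) * (SA + (1 + real t * SA * V) * z) = V * SA"
      if "z \<ge> 0" and "F_obj SA lam theta V t z = F_opt SA lam theta V t" for z
    proof -
      have "SA + (1 + real t * SA * V) * z > 0" using a SA_pos that(1) by (simp add: add_pos_nonneg)
      then show ?thesis using F_obj_minus_F_opt_interior[OF True that(1)] that(2) assms(1) a by simp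
    qed
    have "sqrt (lam * theta) * (SA + (1 + real t * SA * V) * x)
        = sqrt (lam * theta) * (SA + (1 + real t * SA * V) * SM_formula SA lam theta V t)"
      using root[OF assms(2,3)] root[OF SM_formula_nonneg F_obj_SM_formula] by simp
    then show ?thesis using lam_pos theta_pos a by simp
  next
    case False
    then have below: "V \<le> sqrt (lam * theta)" by simp
    then have V2: "V\<^sup>2 * SA \<le> lam * theta * SA"
      using sqrt_ge_absD[of V] V_pos SA_pos by simp
    have "x * (lam * theta * (SA + (1 + real t * SA * V) * x) - V\<^sup>2 * SA) = 0"
      using F_obj_minus_F_opt_boundary[OF below assms(2)] assms(1,3) y by simp
    moreover have "lam * theta * SA < lam * theta * (SA + (1 + real t * SA * V) * x)" if "x > 0"
      using a lam_pos theta_pos that by simp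
    ultimately have "x = 0" using V2 assms(2) by (auto simp: less_eq_real_def)
    then show ?thesis using SM_formula_eq_0[OF below] by simp
  qed
qed

end

lemma F_opt_Suc_minus:
  "F_opt SA lam theta V (Suc n) - F_opt SA lam theta V n
    = lam - (pos_part (V - sqrt (lam * theta)))\<^sup>2 * SA
        / ((1 + real n * SA * V) * (1 + (real n + 1) * SA * V))"
proof -
  define A where "A = 1 + real n * SA * V"
  define C where "C = 1 + (real n + 1) * SA * V"
  have "A > 0" "C > 0" unfolding A_def C_def using SA_pos V_pos by (simp_all add: add_pos_nonneg)
  then have "(real n + 1) * SA / C - real n * SA / A = SA / (A * C)"
    unfolding A_def C_def by (simp add: field_simps)
  then show ?thesis
    unfolding F_opt_def A_def[symmetric] C_def[symmetric] by (simp add: A_def C_def algebra_simps)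
qed

lemma F_opt_increment_mono:
  assumes "n \<le> m"
  shows "F_opt SA lam theta V (Suc n) - F_opt SA lam theta V n
    \<le> F_opt SA lam theta V (Suc m) - F_opt SA lam theta V m"
proof -
  have "(1 + real n * SA * V) * (1 + (real n + 1) * SA * V)
      \<le> (1 + real m * SA * V) * (1 + (real m + 1) * SA * V)"
    using assms SA_pos V_pos by (intro mult_mono add_mono) (auto simp: add_nonneg_nonneg)
  then show ?thesis
    unfolding F_opt_Suc_minus using SA_pos V_pos
    by (simp add: divide_left_mono add_pos_nonneg)
qed

lemma F_opt_increment_strict_mono:
  assumes "sqrt (lam * theta) < V" and "n < m"
  shows "F_opt SA lam theta V (Suc n) - F_opt SA lam theta V n
    < F_opt SA lam theta V (Suc m) - F_opt SA lam theta V m"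
proof -
  have "real n * (SA * V) < real m * (SA * V)" and "(real n + 1) * (SA * V) < (real m + 1) * (SA * V)"
    using assms(2) SA_pos V_pos by simp_all
  then have "(1 + real n * SA * V) * (1 + (real n + 1) * SA * V)
      < (1 + real m * SA * V) * (1 + (real m + 1) * SA * V)"
    using SA_pos V_pos by (intro mult_strict_mono) (simp_all add: add_pos_nonneg add_nonneg_nonneg mult.assoc)
  moreover have "(pos_part (V - sqrt (lam * theta)))\<^sup>2 * SA > 0"
    using assms(1) SA_pos unfolding pos_part_def by simp
  ultimately show ?thesis
    unfolding F_opt_Suc_minus using SA_pos V_pos
    by (simp add: divide_strict_left_mono add_pos_nonneg)
qed

lemma F_opt_Suc_compare:
  fixes n :: nat
  defines "P \<equiv> pos_part (V - sqrt (lam * theta))"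
    and "Q \<equiv> (1 + real n * SA * V) * (1 + (real n + 1) * SA * V)"
  shows "F_opt SA lam theta V (Suc n) < F_opt SA lam theta V n \<longleftrightarrow> lam * Q < P\<^sup>2 * SA"
    and "F_opt SA lam theta V (Suc n) = F_opt SA lam theta V n \<longleftrightarrow> P\<^sup>2 * SA = lam * Q"
    and "F_opt SA lam theta V n < F_opt SA lam theta V (Suc n) \<longleftrightarrow> P\<^sup>2 * SA < lam * Q"
proof -
  have Q: "Q > 0" unfolding Q_def using SA_pos V_pos by (simp add: add_pos_nonneg)
  have diff: "F_opt SA lam theta V (Suc n) - F_opt SA lam theta V n = lam - P\<^sup>2 * SA / Q"
    unfolding F_opt_Suc_minus P_def Q_def ..
  have "F_opt SA lam theta V (Suc n) < F_opt SA lam theta V n \<longleftrightarrow> lam < P\<^sup>2 * SA / Q"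
    using diff by linarith
  then show "F_opt SA lam theta V (Suc n) < F_opt SA lam theta V n \<longleftrightarrow> lam * Q < P\<^sup>2 * SA"
    using Q by (simp add: less_divide_eq)
  have "F_opt SA lam theta V (Suc n) = F_opt SA lam theta V n \<longleftrightarrow> P\<^sup>2 * SA / Q = lam"
    using diff by linarith
  then show "F_opt SA lam theta V (Suc n) = F_opt SA lam theta V n \<longleftrightarrow> P\<^sup>2 * SA = lam * Q"
    using Q by (simp add: divide_eq_eq)
  have "F_opt SA lam theta V n < F_opt SA lam theta V (Suc n) \<longleftrightarrow> P\<^sup>2 * SA / Q < lam"
    using diff by linarith
  then show "F_opt SA lam theta V n < F_opt SA lam theta V (Suc n) \<longleftrightarrow> P\<^sup>2 * SA < lam * Q"
    using Q by (simp add: divide_less_eq)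
qed

lemma F_opt_Suc_greater_if_below:
  assumes "V \<le> sqrt (lam * theta)"
  shows "F_opt SA lam theta V n < F_opt SA lam theta V (Suc n)"
  using F_opt_Suc_minus[of n] assms lam_pos unfolding pos_part_def by simp

lemma F_opt_Suc_less_iff:
  assumes "int n \<le> t_star SA lam"
  shows "F_opt SA lam theta V (Suc n) < F_opt SA lam theta V n \<longleftrightarrow> v_th SA theta lam (int n) < V"
    and "F_opt SA lam theta V (Suc n) = F_opt SA lam theta V n \<longleftrightarrow> V = v_th SA theta lam (int n)"
proof -
  define P where "P = pos_part (V - sqrt (lam * theta))"
  define Q where "Q = (1 + real n * SA * V) * (1 + (real n + 1) * SA * V)"
  have Q: "Q > 0" unfolding Q_def using SA_pos V_pos by (simp add: add_pos_nonneg)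
  obtain c r where c: "c > 0" and r: "r < sqrt (lam * theta)"
    and v: "sqrt (lam * theta) < v_th SA theta lam (int n)"
    and factor: "\<And>x. SA * (x - sqrt (lam * theta))\<^sup>2
            - lam * ((1 + real n * SA * x) * (1 + (real n + 1) * SA * x))
          = c * (x - v_th SA theta lam (int n)) * (x - r)"
    using threshold_quadratic_roots[OF SA_pos lam_pos theta_pos] le_t_star_iff[OF SA_pos lam_pos] assms by blast
  have "(lam * Q < P\<^sup>2 * SA \<longleftrightarrow> v_th SA theta lam (int n) < V)
    \<and> (P\<^sup>2 * SA = lam * Q \<longleftrightarrow> V = v_th SA theta lam (int n))"
  proof (cases "sqrt (lam * theta) < V")
    case True
    define k where "k = c * (V - r)"
    have "P\<^sup>2 * SA - lam * Q = k * (V - v_th SA theta lam (int n))"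
      unfolding P_def Q_def pos_part_def k_def using True factor[of V] by (simp add: ac_simps)
    moreover have "k > 0" unfolding k_def using c r True by simp
    ultimately have "0 < P\<^sup>2 * SA - lam * Q \<longleftrightarrow> 0 < V - v_th SA theta lam (int n)"
      and "P\<^sup>2 * SA - lam * Q = 0 \<longleftrightarrow> V - v_th SA theta lam (int n) = 0"
      by (simp_all add: zero_less_mult_iff)
    then show ?thesis by linarith
  next
    case False
    then have "P = 0" unfolding P_def pos_part_def by simp
    then show ?thesis using False v mult_pos_pos[OF lam_pos Q] by auto
  qed
  then show "F_opt SA lam theta V (Suc n) < F_opt SA lam theta V n \<longleftrightarrow> v_th SA theta lam (int n) < V"
    and "F_opt SA lam theta V (Suc n) = F_opt SA lam theta V n \<longleftrightarrow> V = v_th SA theta lam (int n)"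
    unfolding F_opt_Suc_compare P_def Q_def by simp_all
qed

lemma F_opt_Suc_greater_beyond_t_star:
  assumes "t_star SA lam < int n"
  shows "F_opt SA lam theta V n < F_opt SA lam theta V (Suc n)"
proof (cases "sqrt (lam * theta) < V")
  case True
  define s where "s = sqrt (lam * theta)"
  have "s > 0" unfolding s_def using lam_pos theta_pos by simp
  have big: "lam * (real n + 1) * real n * SA \<ge> 1"
    using le_t_star_iff[OF SA_pos lam_pos, of n] assms by simp
  have "(V - s)\<^sup>2 * SA < SA * V\<^sup>2"
    using True \<open>s > 0\<close> SA_pos unfolding s_def[symmetric] by (simp add: power2_eq_square algebra_simps)
  also have "SA * V\<^sup>2 \<le> (lam * (real n + 1) * real n * SA) * (SA * V\<^sup>2)"
    using mult_right_mono[OF big, of "SA * V\<^sup>2"] SA_pos by simp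
  also have "\<dots> \<le> lam * ((1 + real n * SA * V) * (1 + (real n + 1) * SA * V))"
    using lam_pos SA_pos V_pos by (simp add: algebra_simps power2_eq_square)
  finally show ?thesis
    unfolding F_opt_Suc_compare pos_part_def s_def using True by simp
next
  case False
  then show ?thesis by (simp add: F_opt_Suc_greater_if_below)
qed

lemma is_myopic_iff:
  "is_myopic SA lam theta B V t SM \<longleftrightarrow>
     is_arg_min (F_opt SA lam theta V) (\<lambda>u. u \<le> B) t \<and> SM \<ge> 0
     \<and> F_obj SA lam theta V t SM = F_opt SA lam theta V t"
proof
  assume myopic: "is_myopic SA lam theta B V t SM"
  then have t: "t \<le> B" and SM: "SM \<ge> 0" unfolding is_myopic_def by auto
  have upper: "F_obj SA lam theta V t SM \<le> F_opt SA lam theta V u" if "u \<le> B" for u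
    using myopic that SM_formula_nonneg[of u] F_obj_SM_formula[of u] unfolding is_myopic_def by metis
  have "F_opt SA lam theta V t \<le> F_obj SA lam theta V t SM" using F_opt_le_F_obj[OF SM] .
  with upper[OF t] upper show "is_arg_min (F_opt SA lam theta V) (\<lambda>u. u \<le> B) t \<and> SM \<ge> 0
     \<and> F_obj SA lam theta V t SM = F_opt SA lam theta V t"
    unfolding is_arg_min_linorder using t SM by fastforce
next
  assume "is_arg_min (F_opt SA lam theta V) (\<lambda>u. u \<le> B) t \<and> SM \<ge> 0
     \<and> F_obj SA lam theta V t SM = F_opt SA lam theta V t"
  then show "is_myopic SA lam theta B V t SM"
    unfolding is_myopic_def is_arg_min_linorder using F_opt_le_F_obj by (metis order.trans)
qed

lemma is_myopic_SM_formula_iff: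
  "is_myopic SA lam theta B V t (SM_formula SA lam theta V t) \<longleftrightarrow>
     is_arg_min (F_opt SA lam theta V) (\<lambda>u. u \<le> B) t"
  using is_myopic_iff SM_formula_nonneg F_obj_SM_formula by simp

lemma F_opt_Suc_less_mono:
  assumes "n \<le> m" and "F_opt SA lam theta V (Suc m) < F_opt SA lam theta V m"
  shows "F_opt SA lam theta V (Suc n) < F_opt SA lam theta V n"
  using F_opt_increment_mono[OF assms(1)] assms(2) by simp

lemma F_opt_Suc_greater_mono:
  assumes "n \<le> m" and "F_opt SA lam theta V n < F_opt SA lam theta V (Suc n)"
  shows "F_opt SA lam theta V m < F_opt SA lam theta V (Suc m)"
  using F_opt_increment_mono[OF assms(1)] assms(2) by simp

lemma strict_valley_above_top_threshold:
  assumes "v_th SA theta lam (t_star SA lam) < V"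
  shows "strict_valley (F_opt SA lam theta V) (Suc (nat (t_star SA lam)))"
proof -
  define T where "T = nat (t_star SA lam)"
  have T: "int T = t_star SA lam"
    unfolding T_def using t_star_nonneg[OF SA_pos lam_pos] by simp
  have "F_opt SA lam theta V (Suc T) < F_opt SA lam theta V T"
    using F_opt_Suc_less_iff(1)[of T] T assms by simp
  then show ?thesis
    unfolding strict_valley_def T_def[symmetric]
    using F_opt_Suc_less_mono[of _ T] F_opt_Suc_greater_beyond_t_star T by (auto simp: less_Suc_eq_le)
qed

lemma plateau_at_threshold:
  assumes "0 \<le> th" and "th \<le> t_star SA lam" and "V = v_th SA theta lam th"
  shows "F_opt SA lam theta V (Suc (nat th)) = F_opt SA lam theta V (nat th)"
    and "n < nat th \<Longrightarrow> F_opt SA lam theta V (Suc n) < F_opt SA lam theta V n"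
    and "nat th < n \<Longrightarrow> F_opt SA lam theta V n < F_opt SA lam theta V (Suc n)"
proof -
  show flat: "F_opt SA lam theta V (Suc (nat th)) = F_opt SA lam theta V (nat th)"
    using F_opt_Suc_less_iff(2)[of "nat th"] assms by simp
  then have "sqrt (lam * theta) < V"
    using F_opt_Suc_greater_if_below[of "nat th"] by fastforce
  then show "n < nat th \<Longrightarrow> F_opt SA lam theta V (Suc n) < F_opt SA lam theta V n"
    and "nat th < n \<Longrightarrow> F_opt SA lam theta V n < F_opt SA lam theta V (Suc n)"
    using F_opt_increment_strict_mono flat by fastforce+
qed

lemma strict_valley_iff_between_thresholds:
  assumes "0 \<le> th" and "th \<le> t_star SA lam"
  shows "strict_valley (F_opt SA lam theta V) (nat th) \<longleftrightarrow>
    v_th SA theta lam (th - 1) < V \<and> V < v_th SA theta lam th"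
proof -
  define k where "k = nat th"
  have k: "int k = th" unfolding k_def using assms(1) by simp
  have ascent_iff: "F_opt SA lam theta V k < F_opt SA lam theta V (Suc k) \<longleftrightarrow> V < v_th SA theta lam th"
    using F_opt_Suc_less_iff[of k] k assms(2) by auto
  have descent_iff: "F_opt SA lam theta V k < F_opt SA lam theta V (k - 1) \<longleftrightarrow> v_th SA theta lam (th - 1) < V"
    if "k > 0"
    using F_opt_Suc_less_iff(1)[of "k - 1"] k that assms(2) by (simp add: of_nat_diff)
  have start: "v_th SA theta lam (-1) < V" unfolding v_th_def using V_pos by simp
  show ?thesis
    unfolding k_def[symmetric] strict_valley_def
  proof
    assume valley: "(\<forall>n<k. F_opt SA lam theta V (Suc n) < F_opt SA lam theta V n)
      \<and> (\<forall>n\<ge>k. F_opt SA lam theta V n < F_opt SA lam theta V (Suc n))"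
    have "v_th SA theta lam (th - 1) < V"
    proof (cases "k = 0")
      case True
      then show ?thesis using start k by simp
    next
      case False
      then have "F_opt SA lam theta V (Suc (k - 1)) < F_opt SA lam theta V (k - 1)"
        using valley[THEN conjunct1, rule_format, of "k - 1"] by simp
      then show ?thesis using descent_iff False by simp
    qed
    then show "v_th SA theta lam (th - 1) < V \<and> V < v_th SA theta lam th"
      using valley ascent_iff by simp
  next
    assume between: "v_th SA theta lam (th - 1) < V \<and> V < v_th SA theta lam th"
    have "F_opt SA lam theta V (Suc n) < F_opt SA lam theta V n" if "n < k" for n
      using F_opt_Suc_less_mono[of n "k - 1"] descent_iff between that by simp
    then show "(\<forall>n<k. F_opt SA lam theta V (Suc n) < F_opt SA lam theta V n)
      \<and> (\<forall>n\<ge>k. F_opt SA lam theta V n < F_opt SA lam theta V (Suc n))"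
      using F_opt_Suc_greater_mono ascent_iff between by blast
  qed
qed

lemma strict_valley_below_top_threshold:
  assumes "V \<le> v_th SA theta lam (t_star SA lam)"
    and "\<forall>th. 0 \<le> th \<and> th \<le> t_star SA lam \<longrightarrow> V \<noteq> v_th SA theta lam th"
  obtains k where "int k \<le> t_star SA lam" and "strict_valley (F_opt SA lam theta V) k"
proof -
  define T where "T = nat (t_star SA lam)"
  have T: "int T = t_star SA lam"
    unfolding T_def using t_star_nonneg[OF SA_pos lam_pos] by simp
  have no_flat: "F_opt SA lam theta V (Suc n) \<noteq> F_opt SA lam theta V n" if "n \<le> T" for n
    using F_opt_Suc_less_iff(2)[of n] assms(2) T that by auto
  have ascent_T: "F_opt SA lam theta V T < F_opt SA lam theta V (Suc T)"
    using F_opt_Suc_less_iff(1)[of T] no_flat[of T] T assms(1) by fastforce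
  define k where "k = (LEAST n. F_opt SA lam theta V n < F_opt SA lam theta V (Suc n))"
  have "k \<le> T" unfolding k_def using ascent_T by (rule Least_le)
  have ascent: "F_opt SA lam theta V k < F_opt SA lam theta V (Suc k)"
    unfolding k_def using ascent_T by (rule LeastI)
  have "F_opt SA lam theta V (Suc n) < F_opt SA lam theta V n" if "n < k" for n
    using not_less_Least[OF that[unfolded k_def]] no_flat[of n] that \<open>k \<le> T\<close> by fastforce
  then have "strict_valley (F_opt SA lam theta V) k"
    unfolding strict_valley_def using F_opt_Suc_greater_mono[OF _ ascent] by blast
  moreover have "int k \<le> t_star SA lam" using \<open>k \<le> T\<close> T by linarith
  ultimately show ?thesis using that by blast
qed

lemma myopic_count_above_top_threshold:
  assumes "v_th SA theta lam (t_star SA lam) < V"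
  shows "is_arg_min (F_opt SA lam theta V) (\<lambda>u. u \<le> B) t \<longleftrightarrow>
    int t = min (t_star SA lam + 1) (int B)"
  using strict_valley_is_arg_min_iff[OF strict_valley_above_top_threshold[OF assms]]
    t_star_nonneg[OF SA_pos lam_pos] by auto

lemma myopic_count_at_threshold:
  assumes "0 \<le> th" and "th \<le> t_star SA lam" and "V = v_th SA theta lam th"
  shows "is_arg_min (F_opt SA lam theta V) (\<lambda>u. u \<le> B) t \<longleftrightarrow>
    int t = min th (int B) \<or> int t = min (th + 1) (int B)"
  using plateau_is_arg_min_iff[OF plateau_at_threshold(2,1,3)[OF assms]] assms(1) by auto

lemma myopic_count_between_thresholds:
  assumes "0 \<le> th" and "th \<le> t_star SA lam"
    and "v_th SA theta lam (th - 1) < V" and "V < v_th SA theta lam th"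
  shows "is_arg_min (F_opt SA lam theta V) (\<lambda>u. u \<le> B) t \<longleftrightarrow> int t = min th (int B)"
proof -
  have "strict_valley (F_opt SA lam theta V) (nat th)"
    using strict_valley_iff_between_thresholds assms by simp
  then have "is_arg_min (F_opt SA lam theta V) (\<lambda>u. u \<le> B) t \<longleftrightarrow> t = min (nat th) B"
    by (rule strict_valley_is_arg_min_iff)
  also have "\<dots> \<longleftrightarrow> int t = min th (int B)" using assms(1) by linarith
  finally show ?thesis .
qed

lemma between_thresholds_ex1:
  assumes "V \<le> v_th SA theta lam (t_star SA lam)"
    and "\<forall>th. 0 \<le> th \<and> th \<le> t_star SA lam \<longrightarrow> V \<noteq> v_th SA theta lam th"
  shows "\<exists>!th. 0 \<le> th \<and> th \<le> t_star SA lam \<and>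
    v_th SA theta lam (th - 1) < V \<and> V < v_th SA theta lam th"
proof -
  obtain k where "int k \<le> t_star SA lam" and k: "strict_valley (F_opt SA lam theta V) k"
    using strict_valley_below_top_threshold[OF assms] .
  show ?thesis
  proof (rule ex1I)
    show "0 \<le> int k \<and> int k \<le> t_star SA lam \<and>
      v_th SA theta lam (int k - 1) < V \<and> V < v_th SA theta lam (int k)"
      using strict_valley_iff_between_thresholds[of "int k"] k \<open>int k \<le> t_star SA lam\<close> by simp
  next
    fix th assume th: "0 \<le> th \<and> th \<le> t_star SA lam \<and>
      v_th SA theta lam (th - 1) < V \<and> V < v_th SA theta lam th"
    then have "strict_valley (F_opt SA lam theta V) (nat th)"
      using strict_valley_iff_between_thresholds by simp
    then show "th = int k" using strict_valley_unique[OF _ k] th by fastforce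
  qed
qed

end

theorem theorem1:
  fixes SA cTX phi theta lam V SM :: real and B t :: nat
  assumes "SA > 0" and "cTX > 0" and "phi > 0" and "theta = phi / cTX"
    and "B \<ge> 1"
    and "0 < lam" and "lam \<le> lam_th SA theta"
    and "0 < V" and "V \<le> 1"
    and "is_myopic SA lam theta B V t SM"
  shows
    "(V > v_th SA theta lam (t_star SA lam) \<longrightarrow>
        int t = min (t_star SA lam + 1) (int B))
   \<and> (\<forall>th. 0 \<le> th \<and> th \<le> t_star SA lam \<and> V = v_th SA theta lam th \<longrightarrow>
        (int t = min (th + 1) (int B) \<or> int t = min th (int B))
        \<and> (\<exists>SM1. is_myopic SA lam theta B V (nat (min (th + 1) (int B))) SM1)
        \<and> (\<exists>SM0. is_myopic SA lam theta B V (nat (min th (int B))) SM0))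
   \<and> (V \<le> v_th SA theta lam (t_star SA lam) \<and>
       (\<forall>th. 0 \<le> th \<and> th \<le> t_star SA lam \<longrightarrow> V \<noteq> v_th SA theta lam th) \<longrightarrow>
        (\<exists>!th. 0 \<le> th \<and> th \<le> t_star SA lam \<and>
             v_th SA theta lam (th - 1) < V \<and> V < v_th SA theta lam th)
        \<and> (\<forall>th. 0 \<le> th \<and> th \<le> t_star SA lam \<and>
             v_th SA theta lam (th - 1) < V \<and> V < v_th SA theta lam th \<longrightarrow>
             int t = min th (int B)))
   \<and> (t \<ge> 1 \<longrightarrow> SM = SM_formula SA lam theta V t)
   \<and> is_myopic SA lam theta B V t (SM_formula SA lam theta V t)"
proof -
  interpret myopic_setting SA lam theta V
    using assms by unfold_locales simp_all
  have t: "is_arg_min (F_opt SA lam theta V) (\<lambda>u. u \<le> B) t"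
    and SM: "SM \<ge> 0" "F_obj SA lam theta V t SM = F_opt SA lam theta V t"
    using assms(10) is_myopic_iff by auto
  have myopic_at_threshold:
    "(\<exists>SM1. is_myopic SA lam theta B V (nat (min (th + 1) (int B))) SM1)
     \<and> (\<exists>SM0. is_myopic SA lam theta B V (nat (min th (int B))) SM0)"
    if "0 \<le> th" and "th \<le> t_star SA lam" and "V = v_th SA theta lam th" for th
    using myopic_count_at_threshold[OF that] is_myopic_SM_formula_iff that(1) by fastforce
  show ?thesis
    using myopic_count_above_top_threshold myopic_count_at_threshold myopic_at_threshold
      myopic_count_between_thresholds between_thresholds_ex1 SM_formula_unique[OF _ SM]
      is_myopic_SM_formula_iff t
    by (intro conjI allI impI) blast+
qed

end
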